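(* Let $\mathbf{A}=\langle A;\oplus,-,{}^{+},{}^{-},0,1\rangle$ be a quasi-MV* algebra. For $x,y\in A$ define $x\to y:=-x\oplus y$ and $\neg x:=-x$. Then $f(\mathbf{A})=\langle A;\to,\neg,{}^{+},{}^{-},1\rangle$ (with ${}^+,{}^-,1$ those of $\mathbf{A}$) is a quasi-Wajsberg* algebra, where in $f(\mathbf{A})$ the join is $x\vee y=((x^{+}\to y^{+})^{+}\to(\neg x)^{-})\to((y^{-}\to x^{-})^{-}\to x^{-})$.
   Context: A quasi-MV* algebra is an algebra $\langle A;\oplus,-,{}^{+},{}^{-},0,1\rangle$ of type $\langle2,1,1,1,0,0\rangle$ such that for all $x,y,z\in A$: (QMV*1) $x\oplus y=y\oplus x$; (QMV*2) $(1\oplus x)\oplus(y\oplus(1\oplus z))=((1\oplus x)\oplus y)\oplus(1\oplus z)$; (QMV*3) $(x\oplus 1)\oplus 1=1$; (QMV*4) $(x\oplus y)\oplus 0=x\oplus y$; (QMV*5) $x^{+}\oplus 0=(x\oplus 0)^{+}=1\oplus(-1\oplus x)$ and $x^{-}\oplus 0=(x\oplus 0)^{-}=-1\oplus(1\oplus x)$; (QMV*6) $x\oplus y=(x^{+}\oplus y^{+})\oplus(x^{-}\oplus y^{-})$; (QMV*7) $0=-0$; (QMV*8) $x\oplus(-x)=0$; (QMV*9) $-(x\oplus y)=-x\oplus(-y)$; (QMV*10) $-(-x)=x$; (QMV*11) $(-x\oplus(x\oplus y))^{+}=-x^{+}\oplus(x^{+}\oplus y^{+})$; (QMV*12) $x\vee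 y=y\vee x$; (QMV*13) $x\vee(y\vee z)=(x\vee y)\vee z$; (QMV*14) $x\oplus(y\vee z)=(x\oplus y)\vee(x\oplus z)$; where $x\vee y:=(x^{+}\oplus(-x^{+}\oplus y^{+})^{+})\oplus(x^{-}\oplus(-x^{-}\oplus y^{-})^{+})$, and ${}^+,{}^-$ bind tighter than $-$. A quasi-Wajsberg* algebra is an algebra $\langle W;\to,\neg,{}^{+},{}^{-},1\rangle$ of type $\langle2,1,1,1,0\rangle$ such that for all $x,y,z\in W$: (QW*1) $x\to y=\neg y\to\neg x$; (QW*2) $(x\to 1)\to((y\to 1)\to z)=(y\to 1)\to((x\to 1)\to z)$; (QW*3) $(1\to x)\to 1=1$; (QW*4) $(z\to z)\to(x\to y)=x\to y$; (QW*5) $(1\to 1)\to x^{+}=((1\to 1)\to x)^{+}=(x\to 1)\to 1$ and $(1\to 1)\to x^{-}=((1\to 1)\to x)^{-}=(x\to\neg 1)\to\neg 1$; (QW*6) $x\to y=(y^{+}\to x^{-})\to(x^{+}\to y^{-})$; (QW*7) $\neg(x\to y)=y\to x$; (QW*8) $\neg\neg x=x$; (QW*9) $(x\to(\neg x\to y))^{+}=x^{+}\to(\neg x^{+}\to y^{+})$; (QW*10) $x\vee y=y\vee x$; (QW*11) $x\vee(y\vee z)=(x\vee y)\vee z$; (QW*12) $x\to(y\vee z)=(x\to y)\vee(x\to z)$; where $x\vee y:=((x^{+}\to y^{+})^{+}\to(\neg x)^{-})\to((y^{-}\to x^{-})^{-}\to x^{-})$. Conventions: ${}^+,{}^-$ bind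 tighter than $\neg$, which binds tighter than $\to$. *)

theory Defs
  imports Main
begin

definition qmv_join ::
  "('a \<Rightarrow> 'a \<Rightarrow> 'a) \<Rightarrow> ('a \<Rightarrow> 'a) \<Rightarrow> ('a \<Rightarrow> 'a) \<Rightarrow> ('a \<Rightarrow> 'a) \<Rightarrow> 'a \<Rightarrow> 'a \<Rightarrow> 'a" where
  "qmv_join opl neg pl mi x y =
     opl (opl (pl x) (pl (opl (neg (pl x)) (pl y))))
         (opl (mi x) (pl (opl (neg (mi x)) (mi y))))"

definition quasi_MV_star ::
  "('a \<Rightarrow> 'a \<Rightarrow> 'a) \<Rightarrow> ('a \<Rightarrow> 'a) \<Rightarrow> ('a \<Rightarrow> 'a) \<Rightarrow> ('a \<Rightarrow> 'a) \<Rightarrow> 'a \<Rightarrow> 'a \<Rightarrow> bool" where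
  "quasi_MV_star opl neg pl mi zero one \<longleftrightarrow>
    (\<forall>x y z.
      opl x y = opl y x \<and>
      opl (opl one x) (opl y (opl one z)) = opl (opl (opl one x) y) (opl one z) \<and>
      opl (opl x one) one = one \<and>
      opl (opl x y) zero = opl x y \<and>
      opl (pl x) zero = pl (opl x zero) \<and>
      pl (opl x zero) = opl one (opl (neg one) x) \<and>
      opl (mi x) zero = mi (opl x zero) \<and>
      mi (opl x zero) = opl (neg one) (opl one x) \<and>
      opl x y = opl (opl (pl x) (pl y)) (opl (mi x) (mi y)) \<and>
      zero = neg zero \<and>
      opl x (neg x) = zero \<and>
      neg (opl x y) = opl (neg x) (neg y) \<and>
      neg (neg x) = x \<and>
      pl (opl (neg x) (opl x y)) = opl (neg (pl x)) (opl (pl x) (pl y)) \<and>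
      qmv_join opl neg pl mi x y = qmv_join opl neg pl mi y x \<and>
      qmv_join opl neg pl mi x (qmv_join opl neg pl mi y z)
        = qmv_join opl neg pl mi (qmv_join opl neg pl mi x y) z \<and>
      opl x (qmv_join opl neg pl mi y z)
        = qmv_join opl neg pl mi (opl x y) (opl x z))"

definition qw_join ::
  "('a \<Rightarrow> 'a \<Rightarrow> 'a) \<Rightarrow> ('a \<Rightarrow> 'a) \<Rightarrow> ('a \<Rightarrow> 'a) \<Rightarrow> ('a \<Rightarrow> 'a) \<Rightarrow> 'a \<Rightarrow> 'a \<Rightarrow> 'a" where
  "qw_join imp neg pl mi x y =
     imp (imp (pl (imp (pl x) (pl y))) (mi (neg x)))
         (imp (mi (imp (mi y) (mi x))) (mi x))"

definition quasi_W_star ::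
  "('a \<Rightarrow> 'a \<Rightarrow> 'a) \<Rightarrow> ('a \<Rightarrow> 'a) \<Rightarrow> ('a \<Rightarrow> 'a) \<Rightarrow> ('a \<Rightarrow> 'a) \<Rightarrow> 'a \<Rightarrow> bool" where
  "quasi_W_star imp neg pl mi one \<longleftrightarrow>
    (\<forall>x y z.
      imp x y = imp (neg y) (neg x) \<and>
      imp (imp x one) (imp (imp y one) z) = imp (imp y one) (imp (imp x one) z) \<and>
      imp (imp one x) one = one \<and>
      imp (imp z z) (imp x y) = imp x y \<and>
      imp (imp one one) (pl x) = pl (imp (imp one one) x) \<and>
      pl (imp (imp one one) x) = imp (imp x one) one \<and>
      imp (imp one one) (mi x) = mi (imp (imp one one) x) \<and>
      mi (imp (imp one one) x) = imp (imp x (neg one)) (neg one) \<and>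
      imp x y = imp (imp (pl y) (mi x)) (imp (pl x) (mi y)) \<and>
      neg (imp x y) = imp y x \<and>
      neg (neg x) = x \<and>
      pl (imp x (imp (neg x) y)) = imp (pl x) (imp (neg (pl x)) (pl y)) \<and>
      qw_join imp neg pl mi x y = qw_join imp neg pl mi y x \<and>
      qw_join imp neg pl mi x (qw_join imp neg pl mi y z)
        = qw_join imp neg pl mi (qw_join imp neg pl mi x y) z \<and>
      imp x (qw_join imp neg pl mi y z)
        = qw_join imp neg pl mi (imp x y) (imp x z))"

end

theory Submission
  imports Defs
begin

(* Since - is an involution distributing over \<oplus>, most QW* axioms for x \<rightarrow> y = -x \<oplus> y are
   QMV* axioms read through negation. The others depend on right absorption
   x \<oplus> (y \<oplus> 0) = x \<oplus> y, which is not immediate because x \<oplus> 0 = x fails in general: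
   the join is idempotent up to \<oplus> 0 and \<oplus> distributes over it (QMV*14). Absorption makes
   -(x\<^sup>-) and (-x)\<^sup>+ interchangeable as summands, which turns QMV*6 into QW*6 and the
   QW* join into the QMV* join. *)

locale quasi_MV_star_algebra =
  fixes opl :: "'a \<Rightarrow> 'a \<Rightarrow> 'a" (infixl "\<oplus>" 65)
    and neg pl mi :: "'a \<Rightarrow> 'a" and zero one :: 'a
  assumes add_commute: "x \<oplus> y = y \<oplus> x"
    and one_add_assoc: "(one \<oplus> x) \<oplus> (y \<oplus> (one \<oplus> z)) = ((one \<oplus> x) \<oplus> y) \<oplus> (one \<oplus> z)"
    and add_one_one: "(x \<oplus> one) \<oplus> one = one"
    and add_add_zero: "(x \<oplus> y) \<oplus> zero = x \<oplus> y"
    and plus_add_zero: "pl x \<oplus> zero = pl (x \<oplus> zero)"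
    and plus_add_zero_eq: "pl (x \<oplus> zero) = one \<oplus> (neg one \<oplus> x)"
    and minus_add_zero: "mi x \<oplus> zero = mi (x \<oplus> zero)"
    and minus_add_zero_eq: "mi (x \<oplus> zero) = neg one \<oplus> (one \<oplus> x)"
    and add_split: "x \<oplus> y = (pl x \<oplus> pl y) \<oplus> (mi x \<oplus> mi y)"
    and zero_eq_neg_zero: "zero = neg zero"
    and add_neg_self: "x \<oplus> neg x = zero"
    and neg_add: "neg (x \<oplus> y) = neg x \<oplus> neg y"
    and neg_neg: "neg (neg x) = x"
    and plus_neg_add_add: "pl (neg x \<oplus> (x \<oplus> y)) = neg (pl x) \<oplus> (pl x \<oplus> pl y)"
    and join_commute: "qmv_join opl neg pl mi x y = qmv_join opl neg pl mi y x"
    and join_assoc: "qmv_join opl neg pl mi x (qmv_join opl neg pl mi y z)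
                       = qmv_join opl neg pl mi (qmv_join opl neg pl mi x y) z"
    and add_join_distrib: "x \<oplus> qmv_join opl neg pl mi y z
                             = qmv_join opl neg pl mi (x \<oplus> y) (x \<oplus> z)"
begin

abbreviation join :: "'a \<Rightarrow> 'a \<Rightarrow> 'a" where
  "join \<equiv> qmv_join opl neg pl mi"

lemma neg_one_add_assoc:
  "(neg one \<oplus> x) \<oplus> (y \<oplus> (neg one \<oplus> z)) = ((neg one \<oplus> x) \<oplus> y) \<oplus> (neg one \<oplus> z)"
  using arg_cong [OF one_add_assoc [of "neg x" "neg y" "neg z"], of neg]
  by (simp add: neg_add neg_neg)

lemma neg_self_add: "neg x \<oplus> x = zero"
  using add_commute add_neg_self by metis

lemma neg_neg_self_add: "neg (neg y \<oplus> y) \<oplus> x = x \<oplus> zero"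
  using add_commute neg_self_add zero_eq_neg_zero by metis

lemma zero_add_zero: "zero \<oplus> zero = zero"
  using add_add_zero add_neg_self by metis

lemma one_add_zero: "one \<oplus> zero = one"
  using add_one_one [of "neg one"] by (metis neg_self_add add_commute)

lemma neg_one_add_zero: "neg one \<oplus> zero = neg one"
  using arg_cong [OF one_add_zero, of neg] by (simp add: neg_add zero_eq_neg_zero [symmetric])

lemma plus_zero: "pl zero = zero"
  using plus_add_zero_eq [of zero] by (simp add: zero_add_zero neg_one_add_zero add_neg_self)

lemma minus_zero: "mi zero = zero"
  using minus_add_zero_eq [of zero] by (simp add: zero_add_zero one_add_zero neg_self_add)

lemma join_self: "join x x = x \<oplus> zero"
proof -
  have "join x x = (pl x \<oplus> pl zero) \<oplus> (mi x \<oplus> pl zero)"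
    by (simp add: qmv_join_def neg_self_add)
  also have "\<dots> = (pl x \<oplus> pl zero) \<oplus> (mi x \<oplus> mi zero)"
    by (simp add: plus_zero minus_zero)
  finally show ?thesis
    by (simp add: add_split [symmetric])
qed

lemma add_right_add_zero: "x \<oplus> (y \<oplus> zero) = x \<oplus> y"
proof -
  have "x \<oplus> (y \<oplus> zero) = x \<oplus> join y y"
    by (simp add: join_self)
  also have "\<dots> = join (x \<oplus> y) (x \<oplus> y)"
    by (rule add_join_distrib)
  finally show ?thesis
    by (simp add: join_self add_add_zero)
qed

lemma add_zero_add: "(x \<oplus> zero) \<oplus> y = x \<oplus> y"
  using add_right_add_zero add_commute by metis

lemma neg_minus_add: "neg (mi x) \<oplus> y = pl (neg x) \<oplus> y"
proof -
  have "neg (mi x) \<oplus> zero = neg (mi (x \<oplus> zero))"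
    by (simp add: neg_add zero_eq_neg_zero [symmetric] minus_add_zero [symmetric])
  also have "\<dots> = one \<oplus> (neg one \<oplus> neg x)"
    by (simp add: minus_add_zero_eq neg_add neg_neg)
  also have "\<dots> = pl (neg x) \<oplus> zero"
    by (simp add: plus_add_zero plus_add_zero_eq)
  finally show ?thesis
    using add_zero_add by metis
qed

lemma add_neg_minus: "y \<oplus> neg (mi x) = y \<oplus> pl (neg x)"
  using neg_minus_add add_commute by metis

lemma neg_plus_add: "neg (pl x) \<oplus> y = mi (neg x) \<oplus> y"
proof -
  have "neg (pl x) \<oplus> zero = neg (pl (x \<oplus> zero))"
    by (simp add: neg_add zero_eq_neg_zero [symmetric] plus_add_zero [symmetric])
  also have "\<dots> = neg one \<oplus> (one \<oplus> neg x)"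
    by (simp add: plus_add_zero_eq neg_add neg_neg)
  also have "\<dots> = mi (neg x) \<oplus> zero"
    by (simp add: minus_add_zero minus_add_zero_eq)
  finally show ?thesis
    using add_zero_add by metis
qed

lemma neg_add_split: "neg x \<oplus> y = (neg (mi x) \<oplus> pl y) \<oplus> (neg (pl x) \<oplus> mi y)"
proof -
  have "neg x \<oplus> y = (pl (neg x) \<oplus> pl y) \<oplus> (mi (neg x) \<oplus> mi y)"
    by (rule add_split)
  also have "\<dots> = (neg (mi x) \<oplus> pl y) \<oplus> (neg (pl x) \<oplus> mi y)"
    by (simp add: neg_minus_add neg_plus_add)
  finally show ?thesis .
qed

lemma qw_join_neg_add: "qw_join (\<lambda>x y. neg x \<oplus> y) neg pl mi x y = join x y"
proof -
  have "qw_join (\<lambda>x y. neg x \<oplus> y) neg pl mi x y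
      = (pl (neg (pl x) \<oplus> pl y) \<oplus> neg (mi (neg x))) \<oplus> (neg (mi (neg (mi y) \<oplus> mi x)) \<oplus> mi x)"
    by (simp add: qw_join_def neg_add neg_neg)
  also have "\<dots> = (pl (neg (pl x) \<oplus> pl y) \<oplus> pl x) \<oplus> (pl (neg (neg (mi y) \<oplus> mi x)) \<oplus> mi x)"
    by (simp only: neg_minus_add add_neg_minus neg_neg)
  finally show ?thesis
    by (simp add: qmv_join_def add_commute neg_add neg_neg)
qed

theorem quasi_W_star_neg_add: "quasi_W_star (\<lambda>x y. neg x \<oplus> y) neg pl mi one"
  unfolding quasi_W_star_def qw_join_neg_add
proof (intro allI conjI)
  fix x y z
  show "neg x \<oplus> y = neg (neg y) \<oplus> neg x"
    by (simp add: neg_neg add_commute)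
  show "neg (neg x \<oplus> one) \<oplus> (neg (neg y \<oplus> one) \<oplus> z)
      = neg (neg y \<oplus> one) \<oplus> (neg (neg x \<oplus> one) \<oplus> z)"
  proof -
    have "(neg one \<oplus> x) \<oplus> ((neg one \<oplus> y) \<oplus> z) = (neg one \<oplus> x) \<oplus> (z \<oplus> (neg one \<oplus> y))"
      by (simp only: add_commute [of "neg one \<oplus> y" z])
    also have "\<dots> = ((neg one \<oplus> x) \<oplus> z) \<oplus> (neg one \<oplus> y)"
      by (rule neg_one_add_assoc)
    also have "\<dots> = (neg one \<oplus> y) \<oplus> ((neg one \<oplus> x) \<oplus> z)"
      by (rule add_commute)
    moreover have "neg (neg u \<oplus> one) = neg one \<oplus> u" for u
      by (simp add: neg_add neg_neg add_commute)
    ultimately show ?thesis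
      by (simp only:)
  qed
  show "neg (neg one \<oplus> x) \<oplus> one = one"
    by (simp add: neg_add neg_neg add_commute [of one] add_one_one)
  show "neg (neg z \<oplus> z) \<oplus> (neg x \<oplus> y) = neg x \<oplus> y"
    by (simp only: neg_neg_self_add add_add_zero)
  show "neg (neg one \<oplus> one) \<oplus> pl x = pl (neg (neg one \<oplus> one) \<oplus> x)"
    by (simp only: neg_neg_self_add plus_add_zero)
  show "pl (neg (neg one \<oplus> one) \<oplus> x) = neg (neg x \<oplus> one) \<oplus> one"
    unfolding neg_neg_self_add by (simp add: plus_add_zero_eq neg_add neg_neg add_commute)
  show "neg (neg one \<oplus> one) \<oplus> mi x = mi (neg (neg one \<oplus> one) \<oplus> x)"
    by (simp only: neg_neg_self_add minus_add_zero)
  show "mi (neg (neg one \<oplus> one) \<oplus> x) = neg (neg x \<oplus> neg one) \<oplus> neg one"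
    unfolding neg_neg_self_add by (simp add: minus_add_zero_eq neg_add neg_neg add_commute)
  show "neg x \<oplus> y = neg (neg (pl y) \<oplus> mi x) \<oplus> (neg (pl x) \<oplus> mi y)"
    unfolding neg_add_split [of x y] by (simp add: neg_add neg_neg add_commute)
  show "neg (neg x \<oplus> y) = neg y \<oplus> x"
    by (simp add: neg_add neg_neg add_commute)
  show "neg (neg x) = x"
    by (rule neg_neg)
  show "pl (neg x \<oplus> (neg (neg x) \<oplus> y)) = neg (pl x) \<oplus> (neg (neg (pl x)) \<oplus> pl y)"
    by (simp add: neg_neg plus_neg_add_add)
  show "join x y = join y x"
    by (rule join_commute)
  show "join x (join y z) = join (join x y) z"
    by (rule join_assoc)
  show "neg x \<oplus> join y z = join (neg x \<oplus> y) (neg x \<oplus> z)"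
    by (rule add_join_distrib)
qed

end

theorem proposition3p6:
  fixes opl :: "'a \<Rightarrow> 'a \<Rightarrow> 'a" and neg pl mi :: "'a \<Rightarrow> 'a" and zero one :: 'a
  assumes "quasi_MV_star opl neg pl mi zero one"
  shows "quasi_W_star (\<lambda>x y. opl (neg x) y) neg pl mi one"
proof -
  interpret quasi_MV_star_algebra opl neg pl mi zero one
    using assms unfolding quasi_MV_star_def by unfold_locales blast+
  show ?thesis
    by (rule quasi_W_star_neg_add)
qed

end
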